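(* Consider the decoding setting fixed in the context. Let $t_j=|\mathcal{A}_j|$ and run the index-collision-resolution procedure with $\hat t_j=t_j$, which terminates after $\tau$ iterations. Assume that (no $E_1$) $t_j\le T$, and that (no $E_2$) whenever, during this run, the decoder $D$ of $\mathcal{C}$ is applied to a vector of the form $[\mathbf{c}+\tilde{\mathbf{z}}_j/2^{\ell}]\bmod 2$ with $\mathbf{c}\in\mathcal{C}$ and $\ell$ a nonnegative integer, it outputs $\mathbf{c}$. Then for every $\ell\ge1$ (with $\ell\le\tau$), $\mathcal{U}(\mathcal{A}^{(\ell)}_j)=\bigcup_{\ell'=\ell}^{\tau}\mathcal{L}^{(\ell')}$.
   Context: Codes. Let $\mathbf{H}\in\{0,1\}^{m_p\times n_p}$ be a parity-check matrix of a binary linear code $\mathcal{C}_{\mathrm{aux}}$ of length $n_p$ with minimum Hamming distance $d$, and let $T=\lfloor (d-1)/2\rfloor$; denote the $u$-th column of $\mathbf{H}$ by $\mathbf{h}_u$. Let $\mathbf{G}\in\{0,1\}^{m_p\times n}$ be a generator matrix (full row rank) of a binary linear code $\mathcal{C}$ of length $n$ and dimension $m_p$. For $u\in\{1,\dots,n_p\}$ put $\mathbf{c}(u)=\mathbf{h}_u^T\mathbf{G}\bmod 2$ and define $\mathbf{x}(u)\in\mathbb{R}^n$ componentwise by $\mathbf{x}(u)_k=2a(\mathbf{c}(u)_k-1/2)$, where $a>0$ is fixed. Channel. In sub-block $j$, a finite set $\mathcal{A}_j$ of users transmits; user $i\in\mathcal{A}_j$ chose $u_i\in\{1,\dots,n_p\}$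 and sends $\mathbf{x}_{i,j}=\mathbf{x}(u_i)$. The received vector is $\mathbf{y}_j=\sum_{i\in\mathcal{A}_j}\mathbf{x}(u_i)+\mathbf{z}_j$ with noise $\mathbf{z}_j\in\mathbb{R}^n$; put $\tilde{\mathbf{z}}_j=\mathbf{z}_j/(2a)$. "$\bmod 2$" on real vectors is componentwise reduction into $[0,2)$. Basic decoder $\Phi$. For $\mathbf{y}\in\mathbb{R}^n$ and integer $\hat t\ge0$: form $\tilde{\mathbf{y}}=[\mathbf{y}/(2a)+\hat t/2]\bmod 2$; apply a decoder $D$ for $\mathcal{C}$, obtaining $\tilde{\mathbf{c}}\in\mathcal{C}$ (or a flagged error); recover the unique $\tilde{\mathbf{h}}$ with $\tilde{\mathbf{h}}^T\mathbf{G}=\tilde{\mathbf{c}}\bmod 2$; apply the bounded-distance syndrome decoder of $\mathcal{C}_{\mathrm{aux}}$, which returns the unique $S\subseteq\{1,\dots,n_p\}$ with $|S|\le T$ and $\sum_{u\in S}\mathbf{h}_u=\tilde{\mathbf{h}}\bmod 2$ if it exists and flags an error otherwise. $\Phi(\mathbf{y},\hat t)$ is the returned set (or $\emptyset$ with a flagged error). ICR procedure for an estimate $\hat t_j$: $\mathbf{y}^{(1)}_j=\mathbf{y}_j$, $\hat t^{(1)}_j=\hat t_j$, $\mathcal{L}^{(1)}=\Phi(\mathbf{y}^{(1)}_j,\hat t^{(1)}_j)$. For $\ell\ge1$: if $|\mathcal{L}^{(\ell)}|=\hat t^{(\ell)}_j$, stop with $\tau=\ell$ and return $\mathcal{L}^{(1)},\dots,\mathcal{L}^{(\tau)}$;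 if $|\mathcal{L}^{(\ell)}|>\hat t^{(\ell)}_j$, return an error; if $|\mathcal{L}^{(\ell)}|<\hat t^{(\ell)}_j$, set $\hat t^{(\ell+1)}_j=(\hat t^{(\ell)}_j-|\mathcal{L}^{(\ell)}|)/2$ (error if not an integer), $\mathbf{y}^{(\ell+1)}_j=(\mathbf{y}^{(\ell)}_j-\sum_{u\in\mathcal{L}^{(\ell)}}\mathbf{x}(u))/2$, $\mathcal{L}^{(\ell+1)}=\Phi(\mathbf{y}^{(\ell+1)}_j,\hat t^{(\ell+1)}_j)$, and continue. Auxiliary sets. For $u\in\{1,\dots,n_p\}$ let $\mathcal{A}^{(1)}_j(u)=\{i\in\mathcal{A}_j:u_i=u\}$. For $\ell\ge1$, let $\mathcal{B}^{(\ell)}_j(u)\subseteq\mathcal{A}^{(\ell)}_j(u)$ be an (arbitrary) subset with $|\mathcal{B}^{(\ell)}_j(u)|=2\lfloor|\mathcal{A}^{(\ell)}_j(u)|/2\rfloor$, and $\mathcal{A}^{(\ell+1)}_j(u)\subseteq\mathcal{B}^{(\ell)}_j(u)$ an (arbitrary) subset with $|\mathcal{A}^{(\ell+1)}_j(u)|=|\mathcal{B}^{(\ell)}_j(u)|/2$. Put $\mathcal{A}^{(\ell)}_j=\bigcup_u\mathcal{A}^{(\ell)}_j(u)$, $\mathcal{B}^{(\ell)}_j=\bigcup_u\mathcal{B}^{(\ell)}_j(u)$. For a set $\mathcal{S}$ of users, $\mathcal{U}(\mathcal{S})=\{u_i:i\in\mathcal{S}\}$. *)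

theory Defs
  imports Complex_Main
begin

text \<open>Binary vectors/matrices are integer-valued functions with entries in {0,1};
  arithmetic over GF(2) is integer arithmetic followed by mod 2.
  Index sets: rows of H and G are the finite type 'm (so m_p = CARD('m)),
  columns of H are the finite type 'p (so n_p = CARD('p)), code coordinates are
  the finite type 'n (so n = CARD('n)).\<close>

definition binary :: "('a \<Rightarrow> int) \<Rightarrow> bool" where
  "binary v \<longleftrightarrow> (\<forall>x. v x \<in> {0, 1})"

definition binary_mat :: "('a \<Rightarrow> 'b \<Rightarrow> int) \<Rightarrow> bool" where
  "binary_mat M \<longleftrightarrow> (\<forall>r c. M r c \<in> {0, 1})"

definition encode :: "('m::finite \<Rightarrow> 'n \<Rightarrow> int) \<Rightarrow> ('m \<Rightarrow> int) \<Rightarrow> ('n \<Rightarrow> int)" where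
  "encode G h = (\<lambda>k. (\<Sum>r\<in>UNIV. h r * G r k) mod 2)"

definition full_row_rank2 :: "('m::finite \<Rightarrow> 'n \<Rightarrow> int) \<Rightarrow> bool" where
  "full_row_rank2 G \<longleftrightarrow> (\<forall>h. binary h \<longrightarrow> encode G h = (\<lambda>_. 0) \<longrightarrow> h = (\<lambda>_. 0))"

definition code_gen :: "('m::finite \<Rightarrow> 'n \<Rightarrow> int) \<Rightarrow> ('n \<Rightarrow> int) set" where
  "code_gen G = {encode G h | h. binary h}"

definition code_pc :: "('m::finite \<Rightarrow> 'p::finite \<Rightarrow> int) \<Rightarrow> ('p \<Rightarrow> int) set" where
  "code_pc H = {x. binary x \<and> (\<forall>r. (\<Sum>u\<in>UNIV. H r u * x u) mod 2 = 0)}"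

definition hweight :: "('a \<Rightarrow> int) \<Rightarrow> nat" where
  "hweight x = card {i. x i \<noteq> 0}"

definition is_min_dist :: "('a \<Rightarrow> int) set \<Rightarrow> nat \<Rightarrow> bool" where
  "is_min_dist K d \<longleftrightarrow>
     (\<exists>x\<in>K. x \<noteq> (\<lambda>_. 0) \<and> hweight x = d) \<and> (\<forall>x\<in>K. x \<noteq> (\<lambda>_. 0) \<longrightarrow> d \<le> hweight x)"

definition hcol :: "('m \<Rightarrow> 'p \<Rightarrow> int) \<Rightarrow> 'p \<Rightarrow> ('m \<Rightarrow> int)" where
  "hcol H u = (\<lambda>r. H r u)"

definition cw :: "('m::finite \<Rightarrow> 'p \<Rightarrow> int) \<Rightarrow> ('m \<Rightarrow> 'n \<Rightarrow> int) \<Rightarrow> 'p \<Rightarrow> ('n \<Rightarrow> int)" where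
  "cw H G u = encode G (hcol H u)"

definition xsig :: "real \<Rightarrow> ('m::finite \<Rightarrow> 'p \<Rightarrow> int) \<Rightarrow> ('m \<Rightarrow> 'n \<Rightarrow> int) \<Rightarrow> 'p \<Rightarrow> ('n \<Rightarrow> real)" where
  "xsig a H G u = (\<lambda>k. 2 * a * (real_of_int (cw H G u k) - 1/2))"

definition rmod2 :: "real \<Rightarrow> real" where
  "rmod2 x = x - 2 * of_int \<lfloor>x / 2\<rfloor>"

text \<open>Bounded-distance syndrome decoder of C_aux: the unique S with |S| <= T and
  sum of columns h_u (u in S) equal to s mod 2, if it exists; None = flagged error.\<close>
definition syn_sum :: "('m \<Rightarrow> 'p \<Rightarrow> int) \<Rightarrow> 'p set \<Rightarrow> ('m \<Rightarrow> int)" where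
  "syn_sum H S = (\<lambda>r. (\<Sum>u\<in>S. H r u) mod 2)"

definition syn_dec :: "('m \<Rightarrow> 'p::finite \<Rightarrow> int) \<Rightarrow> nat \<Rightarrow> ('m \<Rightarrow> int) \<Rightarrow> 'p set option" where
  "syn_dec H T s =
     (if \<exists>!S. card S \<le> T \<and> syn_sum H S = s
      then Some (THE S. card S \<le> T \<and> syn_sum H S = s) else None)"

definition dec_input :: "real \<Rightarrow> ('n \<Rightarrow> real) \<Rightarrow> nat \<Rightarrow> ('n \<Rightarrow> real)" where
  "dec_input a y t = (\<lambda>k. rmod2 (y k / (2 * a) + real t / 2))"

text \<open>Basic decoder Phi; D returns None for a flagged error. On an error Phi returns {}.\<close>
definition Phi ::
  "real \<Rightarrow> ('m::finite \<Rightarrow> 'p::finite \<Rightarrow> int) \<Rightarrow> ('m \<Rightarrow> 'n \<Rightarrow> int) \<Rightarrow> nat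
   \<Rightarrow> (('n \<Rightarrow> real) \<Rightarrow> ('n \<Rightarrow> int) option) \<Rightarrow> ('n \<Rightarrow> real) \<Rightarrow> nat \<Rightarrow> 'p set" where
  "Phi a H G T D y t =
     (case D (dec_input a y t) of
        None \<Rightarrow> {}
      | Some c \<Rightarrow>
          (case syn_dec H T (THE h. binary h \<and> encode G h = c) of
             None \<Rightarrow> {}
           | Some S \<Rightarrow> S))"

text \<open>ICR state: icr_st ... l = (y^(l+1), t^(l+1)) (index shift by one).\<close>
primrec icr_st ::
  "real \<Rightarrow> ('m::finite \<Rightarrow> 'p::finite \<Rightarrow> int) \<Rightarrow> ('m \<Rightarrow> 'n \<Rightarrow> int) \<Rightarrow> nat
   \<Rightarrow> (('n \<Rightarrow> real) \<Rightarrow> ('n \<Rightarrow> int) option) \<Rightarrow> ('n \<Rightarrow> real) \<Rightarrow> nat \<Rightarrow> nat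
   \<Rightarrow> ('n \<Rightarrow> real) \<times> nat" where
  "icr_st a H G T D y t 0 = (y, t)"
| "icr_st a H G T D y t (Suc l) =
     (let yl = fst (icr_st a H G T D y t l); tl = snd (icr_st a H G T D y t l);
          L = Phi a H G T D yl tl
      in ((\<lambda>k. (yl k - (\<Sum>u\<in>L. xsig a H G u k)) / 2), (tl - card L) div 2))"

text \<open>For l >= 1: y^(l), t-hat^(l), L^(l) of the ICR run started at (y, t).\<close>
definition icr_y where "icr_y a H G T D y t l = fst (icr_st a H G T D y t (l - 1))"
definition icr_t where "icr_t a H G T D y t l = snd (icr_st a H G T D y t (l - 1))"
definition icr_L where
  "icr_L a H G T D y t l = Phi a H G T D (icr_y a H G T D y t l) (icr_t a H G T D y t l)"

definition icr_stops_at where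
  "icr_stops_at a H G T D y t \<tau> \<longleftrightarrow> 1 \<le> \<tau> \<and>
     (\<forall>l\<in>{1..<\<tau>}. card (icr_L a H G T D y t l) < icr_t a H G T D y t l \<and>
                    even (icr_t a H G T D y t l - card (icr_L a H G T D y t l))) \<and>
     card (icr_L a H G T D y t \<tau>) = icr_t a H G T D y t \<tau>"

end

theory Submission
  imports Defs
begin

(*
  Let n_l(v) = |A^(l)(v)| be the number of users still attached to index v at stage l.
  The ICR input at stage l is the superposition  sum_v n_l(v) x(v) + z / 2^(l-1)  with
  t^(l) = sum_v n_l(v).  Since x(v) / (2a) = c(v) - 1/2, the decoder of C sees
  sum_v n_l(v) c(v) + noise mod 2, i.e. the codeword of the syndrome of S = {v. n_l(v) odd},
  and as |S| <= t <= T the syndrome decoder returns exactly S.  Removing one user of every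
  index in S and halving gives the superposition for n_(l+1) = n_l div 2 with halved noise.
  Hence L^(l) = {v. n_l(v) odd}: the ICR lists read off the binary digits of the
  multiplicities.  Stopping forces n_tau <= 1, and then v is still present at stage l iff
  one of its remaining digits n_l'(v), l <= l' <= tau, is odd.
*)

lemma sum_mod2_cong:
  fixes f g :: "'a \<Rightarrow> int"
  assumes "\<And>x. x \<in> A \<Longrightarrow> f x mod 2 = g x mod 2"
  shows "(\<Sum>x\<in>A. f x) mod 2 = (\<Sum>x\<in>A. g x) mod 2"
  by (metis (mono_tags, lifting) assms mod_sum_eq sum.cong)

lemma rmod2_add_even: "rmod2 (x + 2 * of_int j) = rmod2 x"
proof -
  have "\<lfloor>(x + 2 * of_int j) / 2\<rfloor> = \<lfloor>x / 2\<rfloor> + j"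
    by (metis add_divide_distrib floor_add_int nonzero_mult_div_cancel_left zero_neq_numeral)
  then show ?thesis unfolding rmod2_def by simp
qed

lemma rmod2_int_cong:
  assumes "m mod 2 = c mod 2"
  shows "rmod2 (real_of_int m + w) = rmod2 (real_of_int c + w)"
proof -
  obtain j where "m = c + 2 * j"
    using assms by (metis mod_eq_dvd_iff dvdE add_diff_cancel_left' diff_add_cancel)
  then have "real_of_int m + w = (real_of_int c + w) + 2 * of_int j" by simp
  then show ?thesis by (simp only: rmod2_add_even)
qed

lemma indicator_symdiff_in_code_pc:
  fixes H :: "'m::finite \<Rightarrow> 'p::finite \<Rightarrow> int"
  assumes "syn_sum H S1 = syn_sum H S2"
  shows "(\<lambda>u. if u \<in> sym_diff S1 S2 then 1 else 0) \<in> code_pc H"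
  unfolding code_pc_def
proof (intro CollectI conjI allI)
  show "binary (\<lambda>u. if u \<in> sym_diff S1 S2 then 1 else 0 :: int)"
    unfolding binary_def by auto
  fix r
  have restrict: "(\<Sum>u\<in>UNIV. H r u * (if u \<in> S then 1 else 0)) = (\<Sum>u\<in>S. H r u)" for S
    by (simp add: if_distrib sum.If_cases)
  \<comment> \<open>[u \<in> S1] + [u \<in> S2] = [u \<in> S1 \<triangle> S2] + 2 [u \<in> S1 \<inter> S2]\<close>
  have "(\<Sum>u\<in>S1. H r u) + (\<Sum>u\<in>S2. H r u) =
      (\<Sum>u\<in>UNIV. H r u * (if u \<in> sym_diff S1 S2 then 1 else 0)) + 2 * (\<Sum>u\<in>S1 \<inter> S2. H r u)"
    unfolding restrict[symmetric] sum_distrib_left sum.distrib[symmetric]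
    by (rule sum.cong) auto
  moreover have "(\<Sum>u\<in>S1. H r u) mod 2 = (\<Sum>u\<in>S2. H r u) mod 2"
    using assms unfolding syn_sum_def by meson
  ultimately show "(\<Sum>u\<in>UNIV. H r u * (if u \<in> sym_diff S1 S2 then 1 else 0)) mod 2 = 0"
    by presburger
qed

lemma syn_sum_inj_bounded:
  fixes H :: "'m::finite \<Rightarrow> 'p::finite \<Rightarrow> int"
  assumes d: "is_min_dist (code_pc H) d" and T: "T = (d - 1) div 2"
    and "card S1 \<le> T" "card S2 \<le> T" and "syn_sum H S1 = syn_sum H S2"
  shows "S1 = S2"
proof (rule ccontr)
  assume "S1 \<noteq> S2"
  define x where "x = (\<lambda>u. if u \<in> sym_diff S1 S2 then 1 else 0 :: int)"
  have "{u. x u \<noteq> 0} = sym_diff S1 S2" unfolding x_def by auto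
  then have weight: "hweight x = card (sym_diff S1 S2)" unfolding hweight_def by simp
  have "sym_diff S1 S2 \<noteq> {}" using \<open>S1 \<noteq> S2\<close> by auto
  then have "x \<noteq> (\<lambda>_. 0)" "0 < card (sym_diff S1 S2)"
    unfolding x_def by (auto simp: card_gt_0_iff fun_eq_iff)
  moreover have "x \<in> code_pc H"
    unfolding x_def by (rule indicator_symdiff_in_code_pc) fact
  ultimately have "d \<le> card (sym_diff S1 S2)"
    using d weight unfolding is_min_dist_def by auto
  moreover have "card (sym_diff S1 S2) \<le> card S1 + card S2"
    by (intro order_trans[OF card_Un_le] add_mono card_mono) auto
  ultimately show False
    using \<open>0 < card (sym_diff S1 S2)\<close> assms(3,4) T by linarith
qed

lemma syn_dec_syn_sum:
  fixes H :: "'m::finite \<Rightarrow> 'p::finite \<Rightarrow> int"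
  assumes "is_min_dist (code_pc H) d" "T = (d - 1) div 2" and "card S \<le> T"
  shows "syn_dec H T (syn_sum H S) = Some S"
proof -
  have unique: "S' = S" if "card S' \<le> T \<and> syn_sum H S' = syn_sum H S" for S'
    using syn_sum_inj_bounded[OF assms(1,2) _ assms(3)] that by blast
  have "\<exists>!S'. card S' \<le> T \<and> syn_sum H S' = syn_sum H S"
    using assms(3) unique by (intro ex1I[of _ S]) auto
  moreover have "(THE S'. card S' \<le> T \<and> syn_sum H S' = syn_sum H S) = S"
    using assms(3) unique by (intro the_equality) auto
  ultimately show ?thesis unfolding syn_dec_def by simp
qed

lemma encode_diff_mod2:
  "encode G (\<lambda>r. (h r - h' r) mod 2) k = (encode G h k - encode G h' k) mod 2"
proof -
  have "encode G (\<lambda>r. (h r - h' r) mod 2) k = (\<Sum>r\<in>UNIV. (h r - h' r) * G r k) mod 2"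
    unfolding encode_def by (rule sum_mod2_cong) (simp add: mod_mult_left_eq)
  also have "\<dots> = ((\<Sum>r\<in>UNIV. h r * G r k) - (\<Sum>r\<in>UNIV. h' r * G r k)) mod 2"
    by (simp add: sum_subtractf left_diff_distrib)
  also have "\<dots> = (encode G h k - encode G h' k) mod 2"
    unfolding encode_def by (simp add: mod_diff_eq)
  finally show ?thesis .
qed

lemma encode_inj_binary:
  assumes "full_row_rank2 G" "binary h" "binary h'" "encode G h = encode G h'"
  shows "h = h'"
proof -
  have "binary (\<lambda>r. (h r - h' r) mod 2)" unfolding binary_def by (simp add: mod2_eq_if)
  moreover have "encode G (\<lambda>r. (h r - h' r) mod 2) = (\<lambda>_. 0)"
    using assms(4) by (simp add: encode_diff_mod2 fun_eq_iff)
  ultimately have even_diff: "(h r - h' r) mod 2 = 0" for r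
    using assms(1) unfolding full_row_rank2_def by metis
  show ?thesis
  proof
    fix r
    have "h r \<in> {0, 1}" "h' r \<in> {0, 1}" using assms(2,3) unfolding binary_def by auto
    with even_diff[of r] show "h r = h' r" by auto
  qed
qed

lemma encode_syn_sum:
  fixes H :: "'m::finite \<Rightarrow> 'p::finite \<Rightarrow> int"
  shows "encode G (syn_sum H S) k = (\<Sum>u\<in>S. cw H G u k) mod 2"
proof -
  have "encode G (syn_sum H S) k = (\<Sum>r\<in>UNIV. (\<Sum>u\<in>S. H r u) * G r k) mod 2"
    unfolding encode_def syn_sum_def by (rule sum_mod2_cong) (simp add: mod_mult_left_eq)
  also have "\<dots> = (\<Sum>u\<in>S. \<Sum>r\<in>UNIV. H r u * G r k) mod 2"
    by (simp add: sum_distrib_right sum.swap[of _ UNIV S])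
  also have "\<dots> = (\<Sum>u\<in>S. cw H G u k) mod 2"
    unfolding cw_def encode_def hcol_def by (rule sum_mod2_cong) simp
  finally show ?thesis .
qed

lemma sum_mult_cw_mod2:
  fixes n :: "'p::finite \<Rightarrow> nat"
  shows "(\<Sum>v\<in>UNIV. int (n v) * cw H G v k) mod 2 = encode G (syn_sum H {v. odd (n v)}) k mod 2"
proof -
  have "int (n v) * cw H G v k mod 2 = (if odd (n v) then cw H G v k else 0) mod 2" for v
  proof -
    have "int (n v) * cw H G v k mod 2 = (int (n v) mod 2) * cw H G v k mod 2"
      by (simp add: mod_mult_left_eq)
    then show ?thesis by (simp add: mod2_eq_if)
  qed
  then have "(\<Sum>v\<in>UNIV. int (n v) * cw H G v k) mod 2
      = (\<Sum>v\<in>UNIV. if odd (n v) then cw H G v k else 0) mod 2"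
    by (rule sum_mod2_cong)
  also have "\<dots> = (\<Sum>v\<in>{v. odd (n v)}. cw H G v k) mod 2"
    by (simp add: sum.If_cases)
  finally show ?thesis by (simp add: encode_syn_sum)
qed

definition superposition ::
  "real \<Rightarrow> ('m::finite \<Rightarrow> 'p::finite \<Rightarrow> int) \<Rightarrow> ('m \<Rightarrow> 'n \<Rightarrow> int) \<Rightarrow> ('p \<Rightarrow> nat)
   \<Rightarrow> ('n \<Rightarrow> real) \<Rightarrow> ('n \<Rightarrow> real)" where
  "superposition a H G n w = (\<lambda>k. (\<Sum>v\<in>UNIV. real (n v) * xsig a H G v k) + w k)"

lemma dec_input_superposition:
  assumes "a > 0"
  shows "dec_input a (superposition a H G n w) (\<Sum>v\<in>UNIV. n v) =
    (\<lambda>k. rmod2 (real_of_int (encode G (syn_sum H {v. odd (n v)}) k) + w k / (2 * a)))"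
proof
  fix k
  define m where "m = (\<Sum>v\<in>UNIV. int (n v) * cw H G v k)"
  have "(\<Sum>v\<in>UNIV. real (n v) * xsig a H G v k) = 2 * a * real_of_int m - a * (\<Sum>v\<in>UNIV. real (n v))"
    unfolding xsig_def m_def by (simp add: sum_distrib_left sum_subtractf algebra_simps)
  \<comment> \<open>the offset t/2 cancels the -1/2 contributed by each user\<close>
  then have "superposition a H G n w k / (2 * a) + real (\<Sum>v\<in>UNIV. n v) / 2 = real_of_int m + w k / (2 * a)"
    using assms unfolding superposition_def by (simp add: field_simps)
  then have "dec_input a (superposition a H G n w) (\<Sum>v\<in>UNIV. n v) k = rmod2 (real_of_int m + w k / (2 * a))"
    unfolding dec_input_def by (simp only:)
  also have "\<dots> = rmod2 (real_of_int (encode G (syn_sum H {v. odd (n v)}) k) + w k / (2 * a))"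
    unfolding m_def by (rule rmod2_int_cong) (simp add: sum_mult_cw_mod2)
  finally show "dec_input a (superposition a H G n w) (\<Sum>v\<in>UNIV. n v) k =
      rmod2 (real_of_int (encode G (syn_sum H {v. odd (n v)}) k) + w k / (2 * a))" .
qed

lemma Phi_superposition:
  fixes H :: "'m::finite \<Rightarrow> 'p::finite \<Rightarrow> int" and n :: "'p \<Rightarrow> nat"
  assumes "a > 0" and "full_row_rank2 G"
    and d: "is_min_dist (code_pc H) d" and T: "T = (d - 1) div 2"
    and "card {v. odd (n v)} \<le> T"
    and decodes: "\<And>c. c \<in> code_gen G \<Longrightarrow>
       dec_input a (superposition a H G n w) (\<Sum>v\<in>UNIV. n v) = (\<lambda>k. rmod2 (real_of_int (c k) + w k / (2 * a))) \<Longrightarrow>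
       D (dec_input a (superposition a H G n w) (\<Sum>v\<in>UNIV. n v)) = Some c"
  shows "Phi a H G T D (superposition a H G n w) (\<Sum>v\<in>UNIV. n v) = {v. odd (n v)}"
proof -
  define h where "h = syn_sum H {v. odd (n v)}"
  have "binary h" unfolding binary_def h_def syn_sum_def by auto
  then have "encode G h \<in> code_gen G" unfolding code_gen_def by blast
  then have "D (dec_input a (superposition a H G n w) (\<Sum>v\<in>UNIV. n v)) = Some (encode G h)"
    using decodes dec_input_superposition[OF assms(1)] unfolding h_def by blast
  moreover have "(THE h'. binary h' \<and> encode G h' = encode G h) = h"
    using \<open>binary h\<close> encode_inj_binary[OF assms(2)] by blast
  moreover have "syn_dec H T h = Some {v. odd (n v)}"
    unfolding h_def using d T assms(5) by (rule syn_dec_syn_sum)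
  ultimately show ?thesis unfolding Phi_def by simp
qed

lemma users_superposition:
  fixes u :: "'i \<Rightarrow> 'p::finite"
  assumes "finite A"
  shows "(\<lambda>k. (\<Sum>i\<in>A. xsig a H G (u i) k) + w k) = superposition a H G (\<lambda>v. card {i \<in> A. u i = v}) w"
    and "card A = (\<Sum>v\<in>UNIV. card {i \<in> A. u i = v})"
proof -
  have fibres: "(\<Sum>i\<in>A. f (u i)) = (\<Sum>v\<in>UNIV. of_nat (card {i \<in> A. u i = v}) * f v)"
    for f :: "'p \<Rightarrow> 'r::semiring_1"
    by (rule sum_fun_comp) (simp_all add: assms)
  show "(\<lambda>k. (\<Sum>i\<in>A. xsig a H G (u i) k) + w k) = superposition a H G (\<lambda>v. card {i \<in> A. u i = v}) w"
    unfolding superposition_def using fibres[of "\<lambda>v. xsig a H G v _"] by simp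
  show "card A = (\<Sum>v\<in>UNIV. card {i \<in> A. u i = v})"
    using fibres[of "\<lambda>_. 1 :: nat"] by simp
qed

lemma sum_halves:
  fixes n :: "'a \<Rightarrow> nat"
  assumes "finite A"
  shows "(\<Sum>v\<in>A. n v) = 2 * (\<Sum>v\<in>A. n v div 2) + card {v \<in> A. odd (n v)}"
proof -
  have "(\<Sum>v\<in>A. n v) = (\<Sum>v\<in>A. 2 * (n v div 2) + (if odd (n v) then 1 else 0))"
    by (rule sum.cong) auto
  also have "\<dots> = 2 * (\<Sum>v\<in>A. n v div 2) + card {v \<in> A. odd (n v)}"
    using assms by (simp add: sum.distrib sum_distrib_left sum.If_cases Int_def conj_commute)
  finally show ?thesis .
qed

lemma superposition_halve:
  "(\<lambda>k. (superposition a H G n w k - (\<Sum>u\<in>{v. odd (n v)}. xsig a H G u k)) / 2) =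
     superposition a H G (\<lambda>v. n v div 2) (\<lambda>k. w k / 2)"
proof
  fix k
  have "(\<Sum>v\<in>UNIV. real (n v) * xsig a H G v k) - (\<Sum>u\<in>{v. odd (n v)}. xsig a H G u k)
      = (\<Sum>v\<in>UNIV. real (n v) * xsig a H G v k - (if odd (n v) then xsig a H G v k else 0))"
    by (simp add: sum_subtractf sum.If_cases)
  also have "\<dots> = (\<Sum>v\<in>UNIV. 2 * (real (n v div 2) * xsig a H G v k))"
    by (rule sum.cong) (auto elim!: evenE oddE simp: algebra_simps)
  finally have "(\<Sum>v\<in>UNIV. real (n v) * xsig a H G v k) - (\<Sum>u\<in>{v. odd (n v)}. xsig a H G u k)
      = 2 * (\<Sum>v\<in>UNIV. real (n v div 2) * xsig a H G v k)"
    by (simp add: sum_distrib_left)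
  then show "(superposition a H G n w k - (\<Sum>u\<in>{v. odd (n v)}. xsig a H G u k)) / 2 =
      superposition a H G (\<lambda>v. n v div 2) (\<lambda>k. w k / 2) k"
    unfolding superposition_def by (simp add: field_simps)
qed

lemma card_odd_eq_sum_imp_le_1:
  fixes n :: "'a \<Rightarrow> nat"
  assumes "finite A" "card {v \<in> A. odd (n v)} = (\<Sum>v\<in>A. n v)" "v \<in> A"
  shows "n v \<le> 1"
proof -
  have "(\<Sum>v\<in>A. n v div 2) = 0" using sum_halves[OF assms(1), of n] assms(2) by simp
  then have "n v div 2 = 0" using assms(1,3) by simp
  then show ?thesis by simp
qed

lemma halving_le:
  fixes f :: "nat \<Rightarrow> nat"
  assumes "\<And>l. l0 \<le> l \<Longrightarrow> f (Suc l) = f l div 2" and "l0 \<le> l"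
  shows "f l \<le> f l0"
  using assms(2)
proof (induction l rule: dec_induct)
  case (step l)
  then show ?case using assms(1)[of l] by simp
qed simp

lemma halving_pos_iff_odd_later:
  fixes f :: "nat \<Rightarrow> nat"
  assumes halve: "\<And>l. l0 \<le> l \<Longrightarrow> f (Suc l) = f l div 2"
    and "f \<tau> \<le> 1" and "l0 \<le> l" "l \<le> \<tau>"
  shows "0 < f l \<longleftrightarrow> (\<exists>l'\<in>{l..\<tau>}. odd (f l'))"
proof
  show "0 < f l \<Longrightarrow> \<exists>l'\<in>{l..\<tau>}. odd (f l')"
    using assms(4)
  proof (induction l rule: inc_induct)
    case base
    then show ?case using assms(2) by (intro bexI[of _ \<tau>]) auto
  next
    case (step m)
    show ?case
    proof (cases "odd (f m)")
      case False
      have "f (Suc m) = f m div 2" using halve assms(3) step.hyps(1) by simp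
      then have "0 < f (Suc m)" using False step.prems by presburger
      then show ?thesis using step.IH by force
    qed (use step.hyps in auto)
  qed
next
  assume "\<exists>l'\<in>{l..\<tau>}. odd (f l')"
  then obtain l' where "l \<le> l'" "odd (f l')" by auto
  then show "0 < f l"
    using halving_le[of l f l'] halve assms(3) by (metis odd_pos order.trans order_less_le_trans)
qed

lemma icr_first:
  "icr_y a H G T D y t 1 = y" "icr_t a H G T D y t 1 = t"
  unfolding icr_y_def icr_t_def by simp_all

lemma icr_Suc:
  assumes "1 \<le> l"
  shows "icr_y a H G T D y t (Suc l) =
           (\<lambda>k. (icr_y a H G T D y t l k - (\<Sum>u\<in>icr_L a H G T D y t l. xsig a H G u k)) / 2)"
    and "icr_t a H G T D y t (Suc l) = (icr_t a H G T D y t l - card (icr_L a H G T D y t l)) div 2"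
  using assms unfolding icr_y_def icr_t_def icr_L_def
  by (cases l; simp add: Let_def)+

lemma icr_superposition:
  fixes H :: "'m::finite \<Rightarrow> 'p::finite \<Rightarrow> int" and n :: "nat \<Rightarrow> 'p \<Rightarrow> nat"
  assumes "a > 0" and "full_row_rank2 G"
    and "is_min_dist (code_pc H) d" and "T = (d - 1) div 2"
    and halve: "\<And>l v. 1 \<le> l \<Longrightarrow> n (Suc l) v = n l v div 2"
    and "(\<Sum>v\<in>UNIV. n 1 v) \<le> T"
    and y: "y = superposition a H G (n 1) w" and t: "t = (\<Sum>v\<in>UNIV. n 1 v)"
    and decodes: "\<And>l c e. l \<in> {1..\<tau>} \<Longrightarrow> c \<in> code_gen G \<Longrightarrow>
        dec_input a (icr_y a H G T D y t l) (icr_t a H G T D y t l)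
          = (\<lambda>k. rmod2 (real_of_int (c k) + (w k / (2 * a)) / 2 ^ e)) \<Longrightarrow>
        D (dec_input a (icr_y a H G T D y t l) (icr_t a H G T D y t l)) = Some c"
    and "1 \<le> l" "l \<le> \<tau>"
  shows "icr_y a H G T D y t l = superposition a H G (n l) (\<lambda>k. w k / 2 ^ (l - 1))
     \<and> icr_t a H G T D y t l = (\<Sum>v\<in>UNIV. n l v)
     \<and> icr_L a H G T D y t l = {v. odd (n l v)}"
proof -
  have L: "icr_L a H G T D y t l = {v. odd (n l v)}"
    if "1 \<le> l" "l \<le> \<tau>"
      and state: "icr_y a H G T D y t l = superposition a H G (n l) (\<lambda>k. w k / 2 ^ (l - 1))"
        "icr_t a H G T D y t l = (\<Sum>v\<in>UNIV. n l v)" for l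
  proof -
    have "card {v. odd (n l v)} \<le> (\<Sum>v\<in>UNIV. n l v)"
      using sum_halves[of UNIV "n l"] by simp
    also have "\<dots> \<le> (\<Sum>v\<in>UNIV. n 1 v)"
      using halving_le[of 1 "\<lambda>l. n l v" l for v] halve \<open>1 \<le> l\<close> by (simp add: sum_mono)
    finally have "card {v. odd (n l v)} \<le> T" using assms(6) by simp
    then show ?thesis
      unfolding icr_L_def state
      by (rule Phi_superposition[OF assms(1-4)])
        (use decodes[of l _ "l - 1"] that in \<open>simp_all add: state field_simps\<close>)
  qed
  have "icr_y a H G T D y t l = superposition a H G (n l) (\<lambda>k. w k / 2 ^ (l - 1))
     \<and> icr_t a H G T D y t l = (\<Sum>v\<in>UNIV. n l v)"
    using \<open>1 \<le> l\<close> \<open>l \<le> \<tau>\<close>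
  proof (induction l rule: dec_induct)
    case base
    show ?case unfolding icr_first using y t by simp
  next
    case (step m)
    then have state: "icr_y a H G T D y t m = superposition a H G (n m) (\<lambda>k. w k / 2 ^ (m - 1))"
      "icr_t a H G T D y t m = (\<Sum>v\<in>UNIV. n m v)" and L_m: "icr_L a H G T D y t m = {v. odd (n m v)}"
      using L by simp_all
    have "(\<lambda>k. w k / 2 ^ (m - 1) / 2) = (\<lambda>k. w k / 2 ^ (Suc m - 1))"
      using step.hyps(1) by (cases m) (simp_all add: mult.commute)
    then have "icr_y a H G T D y t (Suc m) = superposition a H G (n (Suc m)) (\<lambda>k. w k / 2 ^ (Suc m - 1))"
      unfolding icr_Suc(1)[OF step.hyps(1)] state L_m superposition_halve halve[OF step.hyps(1)] by simp
    moreover have "icr_t a H G T D y t (Suc m) = (\<Sum>v\<in>UNIV. n (Suc m) v)"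
      unfolding icr_Suc(2)[OF step.hyps(1)] state L_m halve[OF step.hyps(1)]
      using sum_halves[of UNIV "n m"] by simp
    ultimately show ?case ..
  qed
  with L \<open>1 \<le> l\<close> \<open>l \<le> \<tau>\<close> show ?thesis by simp
qed

lemma image_Union_nested_fibres:
  assumes "finite A" and fibres: "\<And>v. AA 1 v = {i \<in> A. f i = v}"
    and nested: "\<And>l v. 1 \<le> l \<Longrightarrow> AA (Suc l) v \<subseteq> AA l v" and "1 \<le> l"
  shows "f ` (\<Union>v. AA l v) = {v. 0 < card (AA l v)}"
proof -
  have sub: "AA l v \<subseteq> {i \<in> A. f i = v}" for v
    using \<open>1 \<le> l\<close>
  proof (induction l rule: dec_induct)
    case (step m)
    then show ?case using nested[OF step.hyps(1)] by blast
  qed (simp only: fibres subset_refl)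
  have "finite (AA l v)" for v
    using \<open>finite A\<close> by (rule finite_subset[OF sub finite_subset[OF Collect_restrict]])
  show ?thesis
  proof (intro set_eqI iffI)
    fix v assume "v \<in> f ` (\<Union>v. AA l v)"
    then obtain i w where "i \<in> AA l w" "v = f i" by blast
    with sub have "i \<in> AA l v" by blast
    with \<open>finite (AA l v)\<close> show "v \<in> {v. 0 < card (AA l v)}"
      by (auto simp: card_gt_0_iff)
  next
    fix v assume "v \<in> {v. 0 < card (AA l v)}"
    then obtain i where "i \<in> AA l v" by (auto simp: card_gt_0_iff)
    with sub show "v \<in> f ` (\<Union>v. AA l v)" by blast
  qed
qed

theorem corollary1:
  fixes a :: real
    and H :: "'m::finite \<Rightarrow> 'p::finite \<Rightarrow> int"
    and G :: "'m \<Rightarrow> 'n::finite \<Rightarrow> int"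
    and d T :: nat
    and D :: "('n \<Rightarrow> real) \<Rightarrow> ('n \<Rightarrow> int) option"
    and Aj :: "'i set"
    and uu :: "'i \<Rightarrow> 'p"
    and z :: "'n \<Rightarrow> real"
    and \<tau> :: nat
    and AA BB :: "nat \<Rightarrow> 'p \<Rightarrow> 'i set"
  assumes a_pos: "a > 0"
    and H_bin: "binary_mat H"
    and G_bin: "binary_mat G"
    and G_rank: "full_row_rank2 G"
    and d_def: "is_min_dist (code_pc H) d"
    and T_def: "T = (d - 1) div 2"
    and D_range: "\<And>v c. D v = Some c \<Longrightarrow> c \<in> code_gen G"
    and Aj_fin: "finite Aj"
    and stops: "icr_stops_at a H G T D (\<lambda>k. (\<Sum>i\<in>Aj. xsig a H G (uu i) k) + z k) (card Aj) \<tau>"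
    and no_E1: "card Aj \<le> T"
    and no_E2: "\<And>l c e. l \<in> {1..\<tau>} \<Longrightarrow> c \<in> code_gen G \<Longrightarrow>
        dec_input a (icr_y a H G T D (\<lambda>k. (\<Sum>i\<in>Aj. xsig a H G (uu i) k) + z k) (card Aj) l)
                    (icr_t a H G T D (\<lambda>k. (\<Sum>i\<in>Aj. xsig a H G (uu i) k) + z k) (card Aj) l)
          = (\<lambda>k. rmod2 (real_of_int (c k) + (z k / (2 * a)) / 2 ^ e)) \<Longrightarrow>
        D (dec_input a (icr_y a H G T D (\<lambda>k. (\<Sum>i\<in>Aj. xsig a H G (uu i) k) + z k) (card Aj) l)
                    (icr_t a H G T D (\<lambda>k. (\<Sum>i\<in>Aj. xsig a H G (uu i) k) + z k) (card Aj) l))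
          = Some c"
    and AA_1: "\<And>v. AA 1 v = {i \<in> Aj. uu i = v}"
    and BB_sub: "\<And>l v. 1 \<le> l \<Longrightarrow> BB l v \<subseteq> AA l v"
    and BB_card: "\<And>l v. 1 \<le> l \<Longrightarrow> card (BB l v) = 2 * (card (AA l v) div 2)"
    and AA_sub: "\<And>l v. 1 \<le> l \<Longrightarrow> AA (Suc l) v \<subseteq> BB l v"
    and AA_card: "\<And>l v. 1 \<le> l \<Longrightarrow> card (AA (Suc l) v) = card (BB l v) div 2"
  shows "\<forall>l\<in>{1..\<tau>}. uu ` (\<Union>v. AA l v) =
           (\<Union>l'\<in>{l..\<tau>}. icr_L a H G T D (\<lambda>k. (\<Sum>i\<in>Aj. xsig a H G (uu i) k) + z k) (card Aj) l')"
proof -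
  define Y where "Y = (\<lambda>k. (\<Sum>i\<in>Aj. xsig a H G (uu i) k) + z k)"
  define n where "n l v = card (AA l v)" for l v
  have nested: "AA (Suc l) v \<subseteq> AA l v" if "1 \<le> l" for l v
    using AA_sub[OF that] BB_sub[OF that] by blast
  have halve: "n (Suc l) v = n l v div 2" if "1 \<le> l" for l v
    unfolding n_def using AA_card[OF that] BB_card[OF that] by simp
  have n_1: "n 1 v = card {i \<in> Aj. uu i = v}" for v
    unfolding n_def AA_1 ..
  have received: "Y = superposition a H G (n 1) z" and users: "card Aj = (\<Sum>v\<in>UNIV. n 1 v)"
    unfolding Y_def n_1 by (rule users_superposition[OF Aj_fin])+
  have icr: "icr_y a H G T D Y (card Aj) l = superposition a H G (n l) (\<lambda>k. z k / 2 ^ (l - 1))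
      \<and> icr_t a H G T D Y (card Aj) l = (\<Sum>v\<in>UNIV. n l v)
      \<and> icr_L a H G T D Y (card Aj) l = {v. odd (n l v)}" if "1 \<le> l" "l \<le> \<tau>" for l
    using halve no_E1 users received no_E2[folded Y_def] that
    by (intro icr_superposition[OF a_pos G_rank d_def T_def]) auto
  have "n \<tau> v \<le> 1" for v
    using stops[folded Y_def] icr[of \<tau>]
    by (intro card_odd_eq_sum_imp_le_1[of UNIV]) (auto simp: icr_stops_at_def)
  show ?thesis
    unfolding Y_def[symmetric]
  proof
    fix l assume l: "l \<in> {1..\<tau>}"
    have "uu ` (\<Union>v. AA l v) = {v. 0 < n l v}"
      unfolding n_def using Aj_fin AA_1 nested l by (intro image_Union_nested_fibres) auto
    also have "\<dots> = (\<Union>l'\<in>{l..\<tau>}. {v. odd (n l' v)})"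
      using halving_pos_iff_odd_later[of 1 "\<lambda>l. n l _", OF halve \<open>n \<tau> _ \<le> 1\<close>] l by auto
    also have "\<dots> = (\<Union>l'\<in>{l..\<tau>}. icr_L a H G T D Y (card Aj) l')"
      using icr l by auto
    finally show "uu ` (\<Union>v. AA l v) = \<dots>" .
  qed
qed

end
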